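(* Let $A$ be a finite alphabet, $R$ a symmetric relation on $A$ (set of pairs $(a,b)$), and $I$ a finite set of circular words over $A$; let $S=(A,I,R)$ be the $(1,3)$-CSSH circular splicing system with rules $a\#1\$b\#1$ for $(a,b)\in R$. Then the flat splicing system $\mathcal{S}=(A,Y,R')$ with $Y=Lin(I)$ and $R'=\{\langle a\mid 1-1\mid b\rangle : (a,b)\in R\}$ satisfies $L(\mathcal{S})=Lin(L(S))$. Conversely, let $\mathcal{S}=(A,Y,R')$ be a flat splicing system where $Y\subseteq A^+$ is a finite language closed under the conjugacy relation, $R'=\{\langle a\mid 1-1\mid b\rangle : (a,b)\in R\}$ and $R$ is a symmetric relation on $A$. Let $I=\sim Y$. Then $L(\mathcal{S})=Lin(L(S))$, where $S=(A,I,R)$ is the $(1,3)$-CSSH system with rules $a\#1\$b\#1$ for $(a,b)\in R$.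
   Context: $1$ denotes the empty word, $A^+=A^*\setminus\{1\}$. Conjugacy: $xy\sim yx$; a circular word $\sim w$ is the conjugacy class of $w$; for a set $L$ of circular words, $Lin(L)=\{w\in A^*:\ \sim w\in L\}$; for $Y\subseteq A^*$, $\sim Y=\{\sim w:w\in Y\}$. $(1,3)$-CSSH circular splicing: the rule $a\#1\$b\#1$ (with $a,b$ letters) applied to circular words $\sim xa$ and $\sim yb$ produces $\sim xayb$. $L(S)$ is the smallest set of circular words containing $I$ and closed under applying rules of $R$ to any two of its elements. Flat splicing system $\mathcal{S}=(A,Y,R')$: rules $\langle\alpha\mid\beta-\gamma\mid\delta\rangle$; applying it to $u=x\alpha\beta y$ and $v=\gamma z\delta$ yields $x\alpha\gamma z\delta\beta y$. In particular $\langle a\mid1-1\mid b\rangle$ applied to $u=xay$ and $v=zb$ yields $xazby$. $L(\mathcal{S})$ is the smallest language containing $Y$ and closed under applying rules of $R'$. *)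

theory Defs
  imports Main
begin

text \<open>Words over an alphabet of type 'a are lists; 1 is the empty list.\<close>

definition conjugate :: "'a list \<Rightarrow> 'a list \<Rightarrow> bool" where
  "conjugate w w' \<longleftrightarrow> (\<exists>x y. w = x @ y \<and> w' = y @ x)"

definition circ :: "'a list \<Rightarrow> 'a list set" where
  "circ w = {w'. conjugate w w'}"

definition Lin :: "'a list set set \<Rightarrow> 'a list set" where
  "Lin L = {w. circ w \<in> L}"

text \<open>Circular splicing (Paun) with rules (u1,u2,u3,u4) = u1#u2$u3#u4:
  from circ(h u1 u2) and circ(k u3 u4) produce circ(u2 h u1 u4 k u3).\<close>
inductive_set circ_splicing_lang ::
  "'a list set set \<Rightarrow> ('a list \<times> 'a list \<times> 'a list \<times> 'a list) set \<Rightarrow> 'a list set set"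
  for I Rules where
  init: "c \<in> I \<Longrightarrow> c \<in> circ_splicing_lang I Rules"
| splice: "\<lbrakk> (u1, u2, u3, u4) \<in> Rules;
             circ (h @ u1 @ u2) \<in> circ_splicing_lang I Rules;
             circ (k @ u3 @ u4) \<in> circ_splicing_lang I Rules \<rbrakk>
           \<Longrightarrow> circ (u2 @ h @ u1 @ u4 @ k @ u3) \<in> circ_splicing_lang I Rules"

definition cssh13_rules :: "('a \<times> 'a) set \<Rightarrow> ('a list \<times> 'a list \<times> 'a list \<times> 'a list) set" where
  "cssh13_rules R = {([a], [], [b], []) | a b. (a, b) \<in> R}"

text \<open>Flat splicing with rules <alpha|beta - gamma|delta>:
  from x alpha beta y and gamma z delta produce x alpha gamma z delta beta y.\<close>
inductive_set flat_splicing_lang ::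
  "'a list set \<Rightarrow> ('a list \<times> 'a list \<times> 'a list \<times> 'a list) set \<Rightarrow> 'a list set"
  for Y Rules where
  init: "w \<in> Y \<Longrightarrow> w \<in> flat_splicing_lang Y Rules"
| splice: "\<lbrakk> (\<alpha>, \<beta>, \<gamma>, \<delta>) \<in> Rules;
             x @ \<alpha> @ \<beta> @ y \<in> flat_splicing_lang Y Rules;
             \<gamma> @ z @ \<delta> \<in> flat_splicing_lang Y Rules \<rbrakk>
           \<Longrightarrow> x @ \<alpha> @ \<gamma> @ z @ \<delta> @ \<beta> @ y \<in> flat_splicing_lang Y Rules"

definition flat_rules :: "('a \<times> 'a) set \<Rightarrow> ('a list \<times> 'a list \<times> 'a list \<times> 'a list) set" where
  "flat_rules R = {([a], [], [], [b]) | a b. (a, b) \<in> R}"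

end

theory Submission
  imports Defs
begin

text \<open>Linearising the (1,3)-CSSH step \<open>\<sim>ha, \<sim>kb \<mapsto> \<sim>hakb\<close> gives the flat step
  \<open>xay, zb \<mapsto> xazby\<close> on a rotation \<open>xay\<close> of \<open>ha\<close>, so flat words stay linearisations of
  circular ones. Conversely, cutting \<open>hakb\<close> anywhere leaves either the factor \<open>kb\<close> or the
  factor \<open>ha\<close> intact; the remaining letters form a rotation of the other factor, into which
  the intact one is inserted by the rule \<open>(a,b)\<close> or, thanks to the symmetry of \<open>R\<close>, by
  \<open>(b,a)\<close>.\<close>

lemma conjugate_refl: "conjugate w w"
  unfolding conjugate_def by (metis append.left_neutral append.right_neutral)

lemma conjugate_sym: "conjugate w w' \<Longrightarrow> conjugate w' w"
  unfolding conjugate_def by blast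

lemma conjugate_iff_rotate: "conjugate w w' \<longleftrightarrow> (\<exists>n. w' = rotate n w)"
  unfolding conjugate_def by (metis append_take_drop_id rotate_append rotate_drop_take)

lemma conjugate_trans: "conjugate u v \<Longrightarrow> conjugate v w \<Longrightarrow> conjugate u w"
  unfolding conjugate_iff_rotate by (metis rotate_rotate)

lemma conjugate_swap: "conjugate (x @ y) (y @ x)"
  unfolding conjugate_def by blast

lemma circ_eq_iff_conjugate: "circ w = circ w' \<longleftrightarrow> conjugate w w'"
  unfolding circ_def using conjugate_refl conjugate_sym conjugate_trans by blast

lemma circ_append_commute: "circ (x @ y) = circ (y @ x)"
  by (simp add: circ_eq_iff_conjugate conjugate_swap)

lemma conjugate_two_letters_cases:
  assumes "conjugate (u @ [a] @ v @ [b]) w"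
  obtains x y where "w = x @ [a] @ v @ [b] @ y" "conjugate (u @ [a]) (x @ [a] @ y)"
    | x y where "w = x @ [b] @ u @ [a] @ y" "conjugate (v @ [b]) (x @ [b] @ y)"
proof -
  from assms obtain p q where "p @ q = u @ [a] @ v @ [b]" and w: "w = q @ p"
    unfolding conjugate_def by auto
  then obtain us where
    "(p = u @ us \<and> us @ q = [a] @ v @ [b]) \<or> (p @ us = u \<and> q = us @ [a] @ v @ [b])"
    by (auto simp: append_eq_append_conv2)
  then consider (in_u) "p @ us = u" "q = us @ [a] @ v @ [b]"
    | (at_a) "p = u" "q = [a] @ v @ [b]"
    | (in_v) us' where "p = u @ [a] @ us'" "us' @ q = v @ [b]"
    by (cases us) auto
  then show thesis
  proof cases
    case in_u
    then show thesis
      using that(1)[of us p] w conjugate_swap[of p "us @ [a]"] by auto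
  next
    case at_a
    then show thesis
      using that(1)[of "[]" u] w conjugate_swap[of u "[a]"] by auto
  next
    case in_v
    show thesis
    proof (cases q rule: rev_exhaust)
      case Nil
      then show thesis
        using that(1)[of u "[]"] w in_v conjugate_refl by auto
    next
      case (snoc q' b')
      with in_v have "us' @ q' = v" "q = q' @ [b]" by auto
      then show thesis
        using that(2)[of q' us'] w in_v conjugate_swap[of us' "q' @ [b]"] by auto
    qed
  qed
qed

lemma Lin_image_circ:
  assumes "\<And>w w'. w \<in> Y \<Longrightarrow> conjugate w w' \<Longrightarrow> w' \<in> Y"
  shows "Lin (circ ` Y) = Y"
  using assms unfolding Lin_def by (auto simp: circ_eq_iff_conjugate) (meson conjugate_sym)

lemma flat_splicing_lang_flat_rule:
  assumes "(a, b) \<in> R"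
    and "x @ [a] @ y \<in> flat_splicing_lang Y (flat_rules R)"
    and "z @ [b] \<in> flat_splicing_lang Y (flat_rules R)"
  shows "x @ [a] @ z @ [b] @ y \<in> flat_splicing_lang Y (flat_rules R)"
proof -
  have "([a], [], [], [b]) \<in> flat_rules R"
    using assms(1) unfolding flat_rules_def by blast
  from flat_splicing_lang.splice[OF this, where x = x and y = y and z = z] assms(2,3)
  show ?thesis by simp
qed

lemma circ_splicing_lang_cssh13_rule:
  assumes "(a, b) \<in> R"
    and "circ (h @ [a]) \<in> circ_splicing_lang I (cssh13_rules R)"
    and "circ (k @ [b]) \<in> circ_splicing_lang I (cssh13_rules R)"
  shows "circ (h @ [a] @ k @ [b]) \<in> circ_splicing_lang I (cssh13_rules R)"
proof -
  have "([a], [], [b], []) \<in> cssh13_rules R"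
    using assms(1) unfolding cssh13_rules_def by blast
  from circ_splicing_lang.splice[OF this, where h = h and k = k] assms(2,3) show ?thesis by simp
qed

lemma flat_splicing_lang_subset_Lin:
  "flat_splicing_lang (Lin I) (flat_rules R) \<subseteq> Lin (circ_splicing_lang I (cssh13_rules R))"
proof
  fix w assume "w \<in> flat_splicing_lang (Lin I) (flat_rules R)"
  then show "w \<in> Lin (circ_splicing_lang I (cssh13_rules R))"
  proof (induction rule: flat_splicing_lang.induct)
    case (init w)
    then show ?case by (simp add: Lin_def circ_splicing_lang.init)
  next
    case (splice \<alpha> \<beta> \<gamma> \<delta> x y z)
    then obtain a b where rule: "\<alpha> = [a]" "\<beta> = []" "\<gamma> = []" "\<delta> = [b]" "(a, b) \<in> R"
      unfolding flat_rules_def by blast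
    have "circ ((y @ x) @ [a]) \<in> circ_splicing_lang I (cssh13_rules R)"
      using splice.IH(1) rule circ_append_commute[of y "x @ [a]"] by (simp add: Lin_def)
    moreover have "circ (z @ [b]) \<in> circ_splicing_lang I (cssh13_rules R)"
      using splice.IH(2) rule by (simp add: Lin_def)
    ultimately have "circ ((y @ x) @ [a] @ z @ [b]) \<in> circ_splicing_lang I (cssh13_rules R)"
      by (rule circ_splicing_lang_cssh13_rule[OF rule(5)])
    then show ?case
      using rule circ_append_commute[of y "x @ [a] @ z @ [b]"] by (simp add: Lin_def)
  qed
qed

lemma Lin_subset_flat_splicing_lang:
  assumes "sym R"
  shows "Lin (circ_splicing_lang I (cssh13_rules R)) \<subseteq> flat_splicing_lang (Lin I) (flat_rules R)"
proof -
  have "w \<in> flat_splicing_lang (Lin I) (flat_rules R)"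
    if "c \<in> circ_splicing_lang I (cssh13_rules R)" "circ w = c" for c w
    using that
  proof (induction arbitrary: w rule: circ_splicing_lang.induct)
    case (init c)
    then show ?case by (auto simp: Lin_def intro: flat_splicing_lang.init)
  next
    case (splice u1 u2 u3 u4 h k)
    then obtain a b where rule: "u1 = [a]" "u2 = []" "u3 = [b]" "u4 = []" "(a, b) \<in> R"
      unfolding cssh13_rules_def by blast
    have "(b, a) \<in> R" using rule(5) assms by (simp add: symD)
    have left: "w' \<in> flat_splicing_lang (Lin I) (flat_rules R)" if "conjugate (h @ [a]) w'" for w'
      using splice.IH(1)[of w'] rule conjugate_sym[OF that] by (simp add: circ_eq_iff_conjugate)
    have right: "w' \<in> flat_splicing_lang (Lin I) (flat_rules R)" if "conjugate (k @ [b]) w'" for w'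
      using splice.IH(2)[of w'] rule conjugate_sym[OF that] by (simp add: circ_eq_iff_conjugate)
    have "conjugate (h @ [a] @ k @ [b]) w"
      using splice.prems rule by (simp add: circ_eq_iff_conjugate conjugate_sym)
    then show ?case
    proof (cases rule: conjugate_two_letters_cases)
      case (1 x y)
      then show ?thesis
        using flat_splicing_lang_flat_rule[OF rule(5) left right[OF conjugate_refl]] by simp
    next
      case (2 x y)
      then show ?thesis
        using flat_splicing_lang_flat_rule[OF \<open>(b, a) \<in> R\<close> right left[OF conjugate_refl]] by simp
    qed
  qed
  then show ?thesis unfolding Lin_def by blast
qed

lemma flat_splicing_lang_eq_Lin_circ_splicing_lang:
  assumes "sym R"
  shows "flat_splicing_lang (Lin I) (flat_rules R) = Lin (circ_splicing_lang I (cssh13_rules R))"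
  using flat_splicing_lang_subset_Lin Lin_subset_flat_splicing_lang[OF assms] by blast

theorem proposition11p7:
  fixes A :: "'a set" and R :: "('a \<times> 'a) set"
    and I :: "'a list set set" and Y :: "'a list set"
  assumes "finite A" and "R \<subseteq> A \<times> A" and "sym R"
  shows "((finite I \<and> I \<subseteq> {circ w | w. set w \<subseteq> A}) \<longrightarrow>
            flat_splicing_lang (Lin I) (flat_rules R)
              = Lin (circ_splicing_lang I (cssh13_rules R)))
       \<and> ((finite Y \<and> Y \<subseteq> {w. set w \<subseteq> A \<and> w \<noteq> []}
             \<and> (\<forall>w w'. w \<in> Y \<and> conjugate w w' \<longrightarrow> w' \<in> Y)) \<longrightarrow>
            flat_splicing_lang Y (flat_rules R)
              = Lin (circ_splicing_lang (circ ` Y) (cssh13_rules R)))"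
proof (intro conjI impI)
  show "flat_splicing_lang (Lin I) (flat_rules R) = Lin (circ_splicing_lang I (cssh13_rules R))"
    using flat_splicing_lang_eq_Lin_circ_splicing_lang[OF assms(3)] .
next
  assume "finite Y \<and> Y \<subseteq> {w. set w \<subseteq> A \<and> w \<noteq> []}
             \<and> (\<forall>w w'. w \<in> Y \<and> conjugate w w' \<longrightarrow> w' \<in> Y)"
  then have "Lin (circ ` Y) = Y" by (intro Lin_image_circ) blast
  then show "flat_splicing_lang Y (flat_rules R) = Lin (circ_splicing_lang (circ ` Y) (cssh13_rules R))"
    using flat_splicing_lang_eq_Lin_circ_splicing_lang[OF assms(3), of "circ ` Y"] by simp
qed

end
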